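(* Let Assumptions (G) and (S) hold and let the local clocks be synchronized from $t_0$ on. Let $Q\in\mathbb{R}^{n\times n}$ be symmetric positive definite, and let $P\in\mathbb{R}^{n\times n}$ be a symmetric positive definite solution of the algebraic Riccati equation $$PA+A^TP-PBB^TP+Q=0.$$ Set $K=-B^TP$, and choose constants $c_1\ge \frac{1}{2\lambda_2}$ and $c_2\ge f_0(N-1)$. Let $s_i$, $i=1,\dots,N$, be a solution on $[t_0,\infty)$ of the static algorithm (SA) with $s_i(t_0)=0$ for all $i$, and set $x_i=s_i+r_i$. Then $$\lim_{t\to\infty}\Big\|x_i(t)-\frac1N\sum_{k=1}^N r_k(t)\Big\|=0\qquad\text{for all } i=1,\dots,N.$$
   Context: Graph: $\mathcal{G}$ is a simple graph on the vertex set $\{1,\dots,N\}$. Assumption (G): $\mathcal{G}$ is undirected and connected. $\mathcal{N}_i$ denotes the neighbor set of node $i$ and $|\mathcal{N}_i|$ its cardinality. $L$ is the graph Laplacian (degree matrix minus adjacency matrix), and $\lambda_2$ is its smallest nonzero eigenvalue. Reference signals: $A\in\mathbb{R}^{n\times n}$ and $B\in\mathbb{R}^{n\times p}$ are constant matrices. Assumption (S): the pair $(A,B)$ is stabilizable. For $i=1,\dots,N$, the signal $r_i:[t_0,\infty)\to\mathbb{R}^n$ satisfies $\dot r_i(t)=Ar_i(t)+Bf_i(t)$, where $f_i:[t_0,\infty)\to\mathbb{R}^p$ is continuous with $\|f_i(t)\|\le f_0$ for all $t$, and $f_0>0$ is a constant. Local clocks: each agent $i$ has a local time $t_i(t)$.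 "The local clocks are synchronized from $t_0$ on" means that there is a constant $\eta$ such that $t_i(t)=t+\eta$ for all $i$ and all $t\ge t_0$. Boundary-layer function: for fixed constants $\varepsilon>0$ and $\varphi>0$, and for $\omega\in\mathbb{R}^p$, set $h_i(\omega,t_i)=\dfrac{\omega}{\|\omega\|+\varepsilon e^{-\varphi t_i}}$. Static algorithm (SA): for $i=1,\dots,N$ and $t\ge t_0$, $$\dot s_i=As_i+Bu_i,\qquad u_i=c_1\sum_{j\in\mathcal{N}_i}K(x_i-x_j)+c_2\sum_{j\in\mathcal{N}_i}h_i\big(K(x_i-x_j),t_i\big),\qquad x_i=s_i+r_i.$$ *)

theory Defs
  imports "HOL-Analysis.Analysis"
begin

text \<open>Simple undirected graph on a finite vertex type 'v (vertices = {1..N}, N = CARD('v)),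
given by a symmetric irreflexive adjacency relation E.\<close>

definition undirected_graph :: "('v \<Rightarrow> 'v \<Rightarrow> bool) \<Rightarrow> bool" where
  "undirected_graph E \<longleftrightarrow> (\<forall>i j. E i j \<longleftrightarrow> E j i) \<and> (\<forall>i. \<not> E i i)"

definition connected_graph :: "('v \<Rightarrow> 'v \<Rightarrow> bool) \<Rightarrow> bool" where
  "connected_graph E \<longleftrightarrow> (\<forall>i j. E\<^sup>*\<^sup>* i j)"

definition neighbors :: "('v \<Rightarrow> 'v \<Rightarrow> bool) \<Rightarrow> 'v \<Rightarrow> 'v set" where
  "neighbors E i = {j. E i j}"

definition laplacian :: "('v::finite \<Rightarrow> 'v \<Rightarrow> bool) \<Rightarrow> real^'v^'v" where
  "laplacian E = (\<chi> i j. (if i = j then real (card (neighbors E i)) else 0)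
                          - (if E i j then 1 else 0))"

definition real_eigenvalue :: "real^'n^'n \<Rightarrow> real \<Rightarrow> bool" where
  "real_eigenvalue M \<mu> \<longleftrightarrow> (\<exists>v. v \<noteq> 0 \<and> M *v v = \<mu> *\<^sub>R v)"

definition lambda2 :: "('v::finite \<Rightarrow> 'v \<Rightarrow> bool) \<Rightarrow> real" where
  "lambda2 E = Min {\<mu>. real_eigenvalue (laplacian E) \<mu> \<and> \<mu> \<noteq> 0}"

definition complex_eigenvalue :: "real^'n^'n \<Rightarrow> complex \<Rightarrow> bool" where
  "complex_eigenvalue M \<mu> \<longleftrightarrow>
     (\<exists>v::complex^'n. v \<noteq> 0 \<and> (\<chi> i j. complex_of_real (M $ i $ j)) *v v = \<mu> *s v)"

definition hurwitz :: "real^'n^'n \<Rightarrow> bool" where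
  "hurwitz M \<longleftrightarrow> (\<forall>\<mu>. complex_eigenvalue M \<mu> \<longrightarrow> Re \<mu> < 0)"

definition stabilizable :: "real^'n^'n \<Rightarrow> real^'p^'n \<Rightarrow> bool" where
  "stabilizable A B \<longleftrightarrow> (\<exists>F :: real^'n^'p. hurwitz (A + B ** F))"

definition sym_pos_def :: "real^'n^'n \<Rightarrow> bool" where
  "sym_pos_def M \<longleftrightarrow> transpose M = M \<and> (\<forall>x. x \<noteq> 0 \<longrightarrow> x \<bullet> (M *v x) > 0)"

definition hbl :: "real \<Rightarrow> real \<Rightarrow> real^'p \<Rightarrow> real \<Rightarrow> real^'p" where
  "hbl \<epsilon> \<phi> \<omega> \<tau> = (1 / (norm \<omega> + \<epsilon> * exp (- \<phi> * \<tau>))) *\<^sub>R \<omega>"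

end

theory Submission
  imports Defs "HOL-Library.Transitive_Closure_Table" "HOL-Real_Asymp.Real_Asymp"
begin

text \<open>Let \<xi>_i = x_i - (1/N) \<Sum>_k r_k. The coupling terms of (SA) are odd in x_i - x_j, so the
  inputs u_i sum to zero over the undirected graph; hence \<Sum>_i s_i solves s' = A s from 0 and
  vanishes, which gives \<Sum>_i \<xi>_i = 0 and \<xi>_i' = A \<xi>_i + B (u_i + f_i - (1/N) \<Sum>_k f_k).
  For V = \<Sum>_i \<xi>_i \<bullet> P \<xi>_i the Riccati equation gives
  V' = \<Sum>_i (\<parallel>y_i\<parallel>^2 - \<xi>_i \<bullet> Q \<xi>_i + 2 y_i \<bullet> (u_i + f_i)) with y_i = B^T P \<xi>_i and \<Sum>_i y_i = 0.
  The Rayleigh bound \<lambda>_2 \<parallel>y\<parallel>^2 \<le> y \<bullet> L y on zero-sum vectors and c_1 \<ge> 1/(2\<lambda>_2) let the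
  linear coupling absorb \<Sum>_i \<parallel>y_i\<parallel>^2. Along simple paths of the connected graph, 2 \<Sum>_i \<parallel>y_i\<parallel>
  is at most N - 1 times the sum of \<parallel>y_i - y_j\<parallel> over ordered edges (i, j), so with
  c_2 \<ge> f_0 (N - 1) the boundary layer absorbs the disturbances up to an error of order
  \<epsilon> exp (- \<phi> t). Hence V' \<le> - \<alpha> V + C exp (- \<phi> t), and V tends to 0.\<close>

lemma inner_matrix_vector_transpose: "(a::real^'n) \<bullet> (M *v b) = (transpose M *v a) \<bullet> b"
  by (simp add: dot_lmul_matrix[symmetric])

lemma quadratic_form_scaleR:
  "(c *\<^sub>R v) \<bullet> (M *v (c *\<^sub>R v)) = c\<^sup>2 * (v \<bullet> (M *v v))" for M :: "real^'n^'n"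
  by (simp add: matrix_vector_mult_scaleR power2_eq_square)

lemma matrix_vector_mult_sum: "M *v (\<Sum>i\<in>S. v i) = (\<Sum>i\<in>S. M *v v i)" for M :: "real^'n^'m"
  using linear_sum[OF matrix_vector_mul_linear, of M v S] by (simp add: o_def)

lemma uminus_matrix_vector_mult: "(- M) *v v = - (M *v v)" for M :: "real^'n^'m"
  by (simp add: matrix_vector_mult_def vec_eq_iff sum_negf)

section \<open>Quadratic forms\<close>

lemma nonneg_quadratic_linear_coeff_eq_0:
  fixes a b :: real
  assumes "\<And>\<theta>. 0 \<le> 2 * \<theta> * a + \<theta>\<^sup>2 * b"
  shows "a = 0"
proof -
  define c where "c = \<bar>b\<bar> + 1"
  have "c > 0"
    by (simp add: c_def add_nonneg_pos)
  have "0 \<le> 2 * (- a / c) * a + (- a / c)\<^sup>2 * b"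
    by (rule assms)
  also have "\<dots> \<le> 2 * (- a / c) * a + (- a / c)\<^sup>2 * c"
    unfolding c_def by (intro add_left_mono mult_left_mono) auto
  also have "\<dots> = - (a\<^sup>2 / c)"
    using \<open>c > 0\<close> by (simp add: power2_eq_square field_simps)
  finally have "a\<^sup>2 \<le> 0"
    using \<open>c > 0\<close> by (simp add: divide_le_0_iff)
  then show ?thesis
    by simp
qed

lemma quadratic_form_attains_min_on_subspace:
  fixes M :: "real^'n::finite^'n"
  assumes "subspace Z" "Z \<noteq> {0}"
  obtains z where "z \<in> Z" "z \<bullet> z = 1"
    "\<And>v. v \<in> Z \<Longrightarrow> (z \<bullet> (M *v z)) * (v \<bullet> v) \<le> v \<bullet> (M *v v)"
proof -
  define q where "q v = v \<bullet> (M *v v)" for v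
  define U where "U = Z \<inter> sphere 0 1"
  have normalize: "(1 / norm v) *\<^sub>R v \<in> U" if "v \<in> Z" "v \<noteq> 0" for v
    unfolding U_def using that assms(1) by (simp add: subspace_scale)
  have "compact U"
    unfolding U_def using closed_subspace[OF assms(1)] by (intro closed_Int_compact) auto
  moreover obtain e where "e \<in> Z" "e \<noteq> 0"
    using assms subspace_0 by blast
  then have "U \<noteq> {}"
    using normalize by blast
  moreover have "continuous_on U q"
    unfolding q_def by (intro continuous_intros linear_continuous_on matrix_vector_mul_bounded_linear)
  ultimately obtain z where "z \<in> U" and zmin: "\<And>w. w \<in> U \<Longrightarrow> q z \<le> q w"
    by (metis continuous_attains_inf)
  have "q z * (v \<bullet> v) \<le> q v" if "v \<in> Z" for v
  proof (cases "v = 0")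
    case False
    have "q z \<le> (1 / norm v)\<^sup>2 * q v"
      using zmin[OF normalize[OF that False]] by (simp only: q_def quadratic_form_scaleR)
    then show ?thesis
      using False by (simp add: field_simps power2_norm_eq_inner)
  qed (simp add: q_def)
  moreover have "z \<in> Z" "z \<bullet> z = 1"
    using \<open>z \<in> U\<close> by (simp_all add: U_def flip: norm_eq_1)
  ultimately show ?thesis
    using that unfolding q_def by blast
qed

text \<open>The variation z + \<theta> g with g = M z - \<mu> z stays in Z; minimality forces the term of first
  order in \<theta> to vanish, and that term is g \<bullet> g.\<close>

lemma quadratic_form_minimizer_eigenvector:
  fixes M :: "real^'n::finite^'n"
  assumes "transpose M = M" "subspace Z" "\<And>v. v \<in> Z \<Longrightarrow> M *v v \<in> Z"
    and "z \<in> Z" "z \<bullet> z = 1"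
    and zmin: "\<And>v. v \<in> Z \<Longrightarrow> (z \<bullet> (M *v z)) * (v \<bullet> v) \<le> v \<bullet> (M *v v)"
  shows "M *v z = (z \<bullet> (M *v z)) *\<^sub>R z"
proof -
  define \<mu> where "\<mu> = z \<bullet> (M *v z)"
  define g where "g = M *v z - \<mu> *\<^sub>R z"
  have "g \<in> Z"
    unfolding g_def using assms(2-4) by (simp add: subspace_diff subspace_scale)
  have gz: "g \<bullet> z = 0"
    using \<open>z \<bullet> z = 1\<close> by (simp add: g_def \<mu>_def inner_diff_left inner_commute[of "M *v z" z])
  have sym: "z \<bullet> (M *v g) = g \<bullet> (M *v z)"
    using inner_matrix_vector_transpose[of z M g] assms(1) by (simp add: inner_commute)
  have "0 \<le> 2 * \<theta> * (g \<bullet> (M *v z)) + \<theta>\<^sup>2 * (g \<bullet> (M *v g) - \<mu> * (g \<bullet> g))" for \<theta>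
  proof -
    define v where "v = z + \<theta> *\<^sub>R g"
    have "v \<in> Z"
      unfolding v_def using assms(2,4) \<open>g \<in> Z\<close> by (simp add: subspace_add subspace_scale)
    have "v \<bullet> (M *v v) = \<mu> + 2 * \<theta> * (g \<bullet> (M *v z)) + \<theta>\<^sup>2 * (g \<bullet> (M *v g))"
      unfolding v_def \<mu>_def using sym
      by (simp add: matrix_vector_right_distrib matrix_vector_mult_scaleR inner_add_left
          inner_add_right power2_eq_square algebra_simps)
    moreover have "v \<bullet> v = 1 + \<theta>\<^sup>2 * (g \<bullet> g)"
      unfolding v_def using \<open>z \<bullet> z = 1\<close> gz
      by (simp add: inner_add_left inner_add_right inner_commute power2_eq_square)
    moreover have "\<mu> * (v \<bullet> v) \<le> v \<bullet> (M *v v)"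
      unfolding \<mu>_def using \<open>v \<in> Z\<close> by (rule zmin)
    ultimately show ?thesis
      by (simp add: algebra_simps)
  qed
  then have "g \<bullet> (M *v z) = 0"
    by (rule nonneg_quadratic_linear_coeff_eq_0)
  then have "g \<bullet> g = 0"
    using gz by (simp add: g_def inner_diff_right)
  then show ?thesis
    by (simp add: g_def \<mu>_def)
qed

lemma finite_real_eigenvalues_symmetric:
  fixes M :: "real^'n::finite^'n"
  assumes "transpose M = M"
  shows "finite {\<mu>. real_eigenvalue M \<mu>}"
proof -
  define S where "S = {\<mu>. real_eigenvalue M \<mu>}"
  define ev where "ev \<mu> = (SOME v. v \<noteq> 0 \<and> M *v v = \<mu> *\<^sub>R v)" for \<mu>
  have ev: "ev \<mu> \<noteq> 0 \<and> M *v ev \<mu> = \<mu> *\<^sub>R ev \<mu>" if "\<mu> \<in> S" for \<mu>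
    unfolding ev_def by (rule someI_ex) (use that in \<open>simp add: S_def real_eigenvalue_def\<close>)
  have "inj_on ev S"
  proof (rule inj_onI)
    fix a b assume "a \<in> S" "b \<in> S" "ev a = ev b"
    then have "a *\<^sub>R ev a = b *\<^sub>R ev a"
      using ev[of a] ev[of b] by metis
    then show "a = b"
      using ev[OF \<open>a \<in> S\<close>] by (simp add: scaleR_cancel_right)
  qed
  moreover have "pairwise orthogonal (ev ` S)"
  proof (clarsimp simp: pairwise_def)
    fix a b assume "a \<in> S" "b \<in> S" "ev a \<noteq> ev b"
    have "a * (ev a \<bullet> ev b) = (M *v ev a) \<bullet> ev b"
      using ev[OF \<open>a \<in> S\<close>] by simp
    also have "\<dots> = ev a \<bullet> (M *v ev b)"
      using inner_matrix_vector_transpose[of "ev a" M "ev b"] assms by simp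
    also have "\<dots> = b * (ev a \<bullet> ev b)"
      using ev[OF \<open>b \<in> S\<close>] by simp
    finally have "(a - b) * (ev a \<bullet> ev b) = 0"
      by (simp add: left_diff_distrib)
    moreover have "a \<noteq> b"
      using \<open>ev a \<noteq> ev b\<close> by auto
    ultimately show "orthogonal (ev a) (ev b)"
      by (simp add: orthogonal_def)
  qed
  moreover have "0 \<notin> ev ` S"
    using ev by auto
  ultimately have "finite (ev ` S)"
    by (intro finiteI_independent pairwise_orthogonal_independent)
  then show ?thesis
    unfolding S_def[symmetric] using \<open>inj_on ev S\<close> by (rule finite_imageD)
qed

lemma sym_pos_def_lower_bound:
  fixes M :: "real^'n::finite^'n"
  assumes "sym_pos_def M"
  obtains a where "a > 0" "\<And>x. a * (x \<bullet> x) \<le> x \<bullet> (M *v x)"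
proof -
  have "axis undefined 1 \<in> (UNIV :: (real^'n) set) - {0}"
    by simp
  then have "(UNIV :: (real^'n) set) \<noteq> {0}"
    by blast
  then obtain z where "z \<bullet> z = 1"
    and zmin: "\<And>x. x \<in> UNIV \<Longrightarrow> (z \<bullet> (M *v z)) * (x \<bullet> x) \<le> x \<bullet> (M *v x)"
    by (rule quadratic_form_attains_min_on_subspace[where M = M, OF subspace_UNIV]) blast
  moreover have "z \<bullet> (M *v z) > 0"
    using assms \<open>z \<bullet> z = 1\<close> by (metis sym_pos_def_def inner_zero_left zero_neq_one)
  ultimately show ?thesis
    using that by simp
qed

lemma quadratic_form_upper_bound:
  fixes M :: "real^'n::finite^'n"
  obtains b where "b > 0" "\<And>x. x \<bullet> (M *v x) \<le> b * (x \<bullet> x)"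
proof -
  obtain K where K: "\<And>x. norm (M *v x) \<le> norm x * K"
    using bounded_linear.bounded[OF matrix_vector_mul_bounded_linear[of M]] by blast
  have "x \<bullet> (M *v x) \<le> max K 1 * (x \<bullet> x)" for x
  proof -
    have "x \<bullet> (M *v x) \<le> norm x * norm (M *v x)"
      by (rule norm_cauchy_schwarz)
    also have "\<dots> \<le> norm x * (norm x * max K 1)"
      using K[of x] by (intro mult_left_mono) (auto intro: order_trans[OF _ mult_left_mono])
    also have "\<dots> = max K 1 * (x \<bullet> x)"
      by (simp add: power2_norm_eq_inner[symmetric] power2_eq_square)
    finally show ?thesis .
  qed
  then show ?thesis
    using that[of "max K 1"] by simp
qed

lemma riccati_quadratic_form:
  fixes P A Q :: "real^'n::finite^'n" and B :: "real^'p::finite^'n"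
  assumes "transpose P = P"
    and "P ** A + transpose A ** P - P ** B ** transpose B ** P + Q = 0"
  shows "2 * ((P *v v) \<bullet> (A *v v))
    = ((transpose B ** P) *v v) \<bullet> ((transpose B ** P) *v v) - v \<bullet> (Q *v v)"
proof -
  define w where "w = transpose B *v (P *v v)"
  have "0 = v \<bullet> ((P ** A + transpose A ** P - P ** B ** transpose B ** P + Q) *v v)"
    using assms(2) by simp
  also have "\<dots> = v \<bullet> (P *v (A *v v)) + v \<bullet> (transpose A *v (P *v v))
      - v \<bullet> (P *v (B *v w)) + v \<bullet> (Q *v v)"
    by (simp add: w_def matrix_vector_mult_add_rdistrib matrix_vector_mult_diff_rdistrib
        matrix_vector_mul_assoc inner_add_right inner_diff_right matrix_mul_assoc)
  also have "v \<bullet> (P *v (A *v v)) = (P *v v) \<bullet> (A *v v)"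
    using inner_matrix_vector_transpose[of v P] assms(1) by simp
  also have "v \<bullet> (transpose A *v (P *v v)) = (P *v v) \<bullet> (A *v v)"
    using inner_matrix_vector_transpose[of v "transpose A"] by (simp add: inner_commute)
  also have "v \<bullet> (P *v (B *v w)) = w \<bullet> w"
    using inner_matrix_vector_transpose[of v P] inner_matrix_vector_transpose[of "P *v v" B w] assms(1)
    by (simp add: w_def)
  finally show ?thesis
    by (simp add: w_def matrix_vector_mul_assoc)
qed

section \<open>Sums over the edges of an undirected graph\<close>

lemma sum_neighbors_conv_if:
  "(\<Sum>j\<in>neighbors E i. g j) = (\<Sum>j\<in>(UNIV::'v::finite set). if E i j then g j else 0)"
proof -
  have "neighbors E i = {j\<in>UNIV. E i j}"
    by (simp add: neighbors_def)
  then show ?thesis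
    using sum.inter_filter[of "UNIV::'v set" g "E i"] by simp
qed

lemma sum_neighbors_swap:
  fixes E :: "'v::finite \<Rightarrow> 'v \<Rightarrow> bool"
  assumes "undirected_graph E"
  shows "(\<Sum>i\<in>UNIV. \<Sum>j\<in>neighbors E i. g i j) = (\<Sum>i\<in>UNIV. \<Sum>j\<in>neighbors E i. g j i)"
proof -
  have "(\<Sum>i\<in>UNIV. \<Sum>j\<in>UNIV. if E i j then g i j else 0)
      = (\<Sum>i\<in>UNIV. \<Sum>j\<in>UNIV. if E j i then g j i else 0)"
    by (rule sum.swap)
  also have "\<dots> = (\<Sum>i\<in>UNIV. \<Sum>j\<in>UNIV. if E i j then g j i else 0)"
  proof (intro sum.cong refl)
    fix i j
    have "E j i = E i j"
      using assms by (auto simp: undirected_graph_def)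
    then show "(if E j i then g j i else 0) = (if E i j then g j i else 0)"
      by (simp only:)
  qed
  finally show ?thesis
    unfolding sum_neighbors_conv_if .
qed

lemma sum_neighbors_antisym_eq_0:
  fixes E :: "'v::finite \<Rightarrow> 'v \<Rightarrow> bool" and g :: "'v \<Rightarrow> 'v \<Rightarrow> 'a::real_vector"
  assumes "undirected_graph E" and "\<And>i j. g j i = - g i j"
  shows "(\<Sum>i\<in>UNIV. \<Sum>j\<in>neighbors E i. g i j) = 0"
proof -
  define S where "S = (\<Sum>i\<in>UNIV. \<Sum>j\<in>neighbors E i. g i j)"
  have "S = (\<Sum>i\<in>UNIV. \<Sum>j\<in>neighbors E i. - g i j)"
    unfolding S_def sum_neighbors_swap[OF assms(1), of g] by (intro sum.cong refl assms(2))
  also have "\<dots> = - S"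
    unfolding S_def by (simp add: sum_negf)
  finally have "S = - S" .
  then have "2 *\<^sub>R S = 0"
    by (simp add: scaleR_2 eq_neg_iff_add_eq_0)
  then show ?thesis
    unfolding S_def by simp
qed

lemma sum_neighbors_inner_odd:
  fixes E :: "'v::finite \<Rightarrow> 'v \<Rightarrow> bool" and y :: "'v \<Rightarrow> 'a::real_inner"
  assumes "undirected_graph E" "\<And>w. h (- w) = - h w"
  shows "2 * (\<Sum>i\<in>UNIV. \<Sum>j\<in>neighbors E i. y i \<bullet> h (y i - y j))
    = (\<Sum>i\<in>UNIV. \<Sum>j\<in>neighbors E i. (y i - y j) \<bullet> h (y i - y j))"
proof -
  have "(\<Sum>i\<in>UNIV. \<Sum>j\<in>neighbors E i. y i \<bullet> h (y i - y j))
      = (\<Sum>i\<in>UNIV. \<Sum>j\<in>neighbors E i. - (y j \<bullet> h (y i - y j)))"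
    unfolding sum_neighbors_swap[OF assms(1), of "\<lambda>i j. y i \<bullet> h (y i - y j)"]
    by (intro sum.cong refl) (metis assms(2) inner_minus_right minus_diff_eq)
  then show ?thesis
    by (simp add: inner_diff_left sum_subtractf sum_negf)
qed

definition edge_variation ::
    "('v \<Rightarrow> 'v \<Rightarrow> bool) \<Rightarrow> ('v \<Rightarrow> 'a::real_normed_vector) \<Rightarrow> 'v set \<Rightarrow> real" where
  "edge_variation E y S = (\<Sum>i\<in>S. \<Sum>j\<in>S. if E i j then norm (y i - y j) else 0)"

lemma edge_variation_insert:
  assumes "undirected_graph E" "finite S" "a \<notin> S" "c \<in> S" "E a c"
  shows "edge_variation E y S + 2 * norm (y a - y c) \<le> edge_variation E y (insert a S)"
proof -
  define g where "g i j = (if E i j then norm (y i - y j) else 0)" for i j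
  have "E c a" "\<not> E a a"
    using assms(1,5) by (auto simp: undirected_graph_def)
  then have gac: "g a c = norm (y a - y c)" "g c a = norm (y a - y c)" and "g a a = 0"
    using assms(5) by (simp_all add: g_def norm_minus_commute)
  have "edge_variation E y (insert a S)
      = (\<Sum>j\<in>S. g a j) + (\<Sum>i\<in>S. g i a) + edge_variation E y S"
    using assms(2,3) \<open>g a a = 0\<close>
    by (simp add: edge_variation_def g_def[symmetric] sum.distrib add.assoc)
  moreover have "g a c \<le> (\<Sum>j\<in>S. g a j)"
    by (rule member_le_sum[OF assms(4)]) (simp_all add: g_def assms(2))
  moreover have "g c a \<le> (\<Sum>i\<in>S. g i a)"
    by (rule member_le_sum[OF assms(4)]) (simp_all add: g_def assms(2))
  ultimately show ?thesis
    using gac by linarith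
qed

lemma edge_variation_le_neighbors_sum:
  fixes S :: "'v::finite set"
  shows "edge_variation E y S \<le> (\<Sum>i\<in>UNIV. \<Sum>j\<in>neighbors E i. norm (y i - y j))"
proof -
  have "edge_variation E y S \<le> (\<Sum>i\<in>S. \<Sum>j\<in>UNIV. if E i j then norm (y i - y j) else 0)"
    unfolding edge_variation_def by (rule sum_mono, rule sum_mono2) auto
  also have "\<dots> \<le> (\<Sum>i\<in>UNIV. \<Sum>j\<in>UNIV. if E i j then norm (y i - y j) else 0)"
    by (rule sum_mono2) (auto intro: sum_nonneg)
  finally show ?thesis
    by (simp add: sum_neighbors_conv_if)
qed

text \<open>A simple path uses every edge at most once, and the double sum counts each edge twice.\<close>

lemma rtrancl_path_edge_variation:
  assumes "rtrancl_path E a xs b" "distinct (a # xs)" "undirected_graph E"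
  shows "2 * norm (y a - y b) \<le> edge_variation E y (set (a # xs))"
  using assms
proof (induction rule: rtrancl_path.induct)
  case (base x)
  then show ?case
    by (simp add: edge_variation_def)
next
  case (step x c ys z)
  then have "edge_variation E y (set (c # ys)) + 2 * norm (y x - y c)
      \<le> edge_variation E y (set (x # c # ys))"
    by (simp only: list.set(2)) (rule edge_variation_insert; simp)
  moreover have "norm (y x - y z) \<le> norm (y x - y c) + norm (y c - y z)"
    using norm_triangle_ineq[of "y x - y c" "y c - y z"] by simp
  ultimately show ?case
    using step by simp
qed

lemma norm_diff_le_neighbors_sum:
  fixes E :: "'v::finite \<Rightarrow> 'v \<Rightarrow> bool"
  assumes "undirected_graph E" "connected_graph E"
  shows "2 * norm (y a - y b) \<le> (\<Sum>i\<in>UNIV. \<Sum>j\<in>neighbors E i. norm (y i - y j))"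
proof -
  obtain xs where "rtrancl_path E a xs b"
    using assms(2) by (auto simp: connected_graph_def rtranclp_eq_rtrancl_path)
  then obtain xs' where "rtrancl_path E a xs' b" "distinct (a # xs')"
    by (rule rtrancl_path_distinct)
  then have "2 * norm (y a - y b) \<le> edge_variation E y (set (a # xs'))"
    using assms(1) by (rule rtrancl_path_edge_variation)
  also have "\<dots> \<le> (\<Sum>i\<in>UNIV. \<Sum>j\<in>neighbors E i. norm (y i - y j))"
    by (rule edge_variation_le_neighbors_sum)
  finally show ?thesis .
qed

lemma sum_norm_le_neighbors_sum:
  fixes E :: "'v::finite \<Rightarrow> 'v \<Rightarrow> bool" and y :: "'v \<Rightarrow> 'a::real_normed_vector"
  assumes "undirected_graph E" "connected_graph E" "(\<Sum>i\<in>UNIV. y i) = 0"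
  shows "2 * (\<Sum>i\<in>UNIV. norm (y i))
    \<le> (real CARD('v) - 1) * (\<Sum>i\<in>UNIV. \<Sum>j\<in>neighbors E i. norm (y i - y j))"
proof -
  define T where "T = (\<Sum>i\<in>UNIV. \<Sum>j\<in>neighbors E i. norm (y i - y j))"
  define N where "N = real CARD('v)"
  have each: "N * norm (y i) \<le> (N - 1) * (T / 2)" for i
  proof -
    have "N * norm (y i) = norm (\<Sum>k\<in>UNIV. y i - y k)"
      using assms(3) by (simp add: N_def sum_subtractf sum_constant_scaleR)
    also have "\<dots> \<le> (\<Sum>k\<in>UNIV. norm (y i - y k))"
      by (rule norm_sum)
    also have "\<dots> = (\<Sum>k\<in>UNIV - {i}. norm (y i - y k))"
      using sum.remove[of UNIV i "\<lambda>k. norm (y i - y k)"] by simp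
    also have "\<dots> \<le> (\<Sum>k\<in>UNIV - {i}. T / 2)"
      using norm_diff_le_neighbors_sum[OF assms(1,2)] unfolding T_def
      by (intro sum_mono) (simp add: field_simps)
    finally show ?thesis
      by (simp add: N_def)
  qed
  have "N * (\<Sum>i\<in>UNIV. norm (y i)) \<le> N * ((N - 1) * (T / 2))"
    using sum_mono[OF each] by (simp add: sum_distrib_left N_def)
  then have "(\<Sum>i\<in>UNIV. norm (y i)) \<le> (N - 1) * (T / 2)"
    by (simp add: N_def)
  then show ?thesis
    unfolding T_def N_def by simp
qed

section \<open>The graph Laplacian and its smallest nonzero eigenvalue\<close>

lemma laplacian_mult_vec_nth:
  fixes E :: "'v::finite \<Rightarrow> 'v \<Rightarrow> bool"
  shows "(laplacian E *v z) $ i = (\<Sum>j\<in>neighbors E i. z$i - z$j)"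
proof -
  have "(laplacian E *v z) $ i = (\<Sum>j\<in>UNIV. ((if i = j then real (card (neighbors E i)) else 0)
      - (if E i j then 1 else 0)) * z$j)"
    by (simp add: matrix_vector_mult_def laplacian_def)
  also have "\<dots> = (\<Sum>j\<in>UNIV. (if i = j then real (card (neighbors E i)) * z$j else 0))
      - (\<Sum>j\<in>UNIV. (if E i j then z$j else 0))"
    by (subst sum_subtractf[symmetric]) (intro sum.cong refl; simp add: left_diff_distrib)
  also have "\<dots> = (\<Sum>j\<in>neighbors E i. z$i - z$j)"
    by (simp add: sum_neighbors_conv_if[symmetric] sum_subtractf)
  finally show ?thesis .
qed

lemma transpose_laplacian:
  assumes "undirected_graph E"
  shows "transpose (laplacian E) = laplacian E"
proof -
  have "E i j = E j i" for i j
    using assms by (auto simp: undirected_graph_def)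
  then show ?thesis
    by (simp add: transpose_def laplacian_def vec_eq_iff)
qed

lemma inner_laplacian_eq_sum:
  fixes E :: "'v::finite \<Rightarrow> 'v \<Rightarrow> bool"
  shows "a \<bullet> (laplacian E *v b) = (\<Sum>i\<in>UNIV. \<Sum>j\<in>neighbors E i. a$i * (b$i - b$j))"
  by (simp add: inner_vec_def laplacian_mult_vec_nth sum_distrib_left)

lemma laplacian_quadratic_form:
  fixes E :: "'v::finite \<Rightarrow> 'v \<Rightarrow> bool"
  assumes "undirected_graph E"
  shows "2 * (z \<bullet> (laplacian E *v z)) = (\<Sum>i\<in>UNIV. \<Sum>j\<in>neighbors E i. (z$i - z$j)\<^sup>2)"
proof -
  have "(\<Sum>i\<in>UNIV. \<Sum>j\<in>neighbors E i. (z$i - z$j)\<^sup>2)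
      = (\<Sum>i\<in>UNIV. \<Sum>j\<in>neighbors E i. z$i * (z$i - z$j))
        + (\<Sum>i\<in>UNIV. \<Sum>j\<in>neighbors E i. z$j * (z$j - z$i))"
    by (simp add: sum.distrib[symmetric] power2_eq_square algebra_simps)
  also have "\<dots> = 2 * (\<Sum>i\<in>UNIV. \<Sum>j\<in>neighbors E i. z$i * (z$i - z$j))"
    using sum_neighbors_swap[OF assms, of "\<lambda>i j. z$i * (z$i - z$j)"] by simp
  finally show ?thesis
    by (simp add: inner_laplacian_eq_sum)
qed

lemma laplacian_quadratic_nonneg:
  fixes E :: "'v::finite \<Rightarrow> 'v \<Rightarrow> bool"
  assumes "undirected_graph E"
  shows "0 \<le> z \<bullet> (laplacian E *v z)"
proof -
  have "0 \<le> (\<Sum>i\<in>UNIV. \<Sum>j\<in>neighbors E i. (z$i - z$j)\<^sup>2)"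
    by (intro sum_nonneg) simp
  then show ?thesis
    using laplacian_quadratic_form[OF assms, of z] by linarith
qed

lemma sum_laplacian_mult_vec:
  fixes E :: "'v::finite \<Rightarrow> 'v \<Rightarrow> bool"
  assumes "undirected_graph E"
  shows "(\<Sum>i\<in>UNIV. (laplacian E *v v) $ i) = 0"
  unfolding laplacian_mult_vec_nth
  by (rule sum_neighbors_antisym_eq_0[OF assms]) simp

lemma connected_graph_const:
  assumes "connected_graph E" "\<And>i j. E i j \<Longrightarrow> z i = z j"
  shows "z a = z b"
proof -
  have "E\<^sup>*\<^sup>* a b"
    using assms(1) by (simp add: connected_graph_def)
  then show ?thesis
    by (induction rule: rtranclp_induct) (simp_all add: assms(2))
qed

lemma laplacian_quadratic_pos:
  fixes E :: "'v::finite \<Rightarrow> 'v \<Rightarrow> bool"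
  assumes "undirected_graph E" "connected_graph E" "z \<noteq> 0" "(\<Sum>i\<in>UNIV. z$i) = 0"
  shows "0 < z \<bullet> (laplacian E *v z)"
proof (rule ccontr)
  assume "\<not> 0 < z \<bullet> (laplacian E *v z)"
  then have "(\<Sum>i\<in>UNIV. \<Sum>j\<in>neighbors E i. (z$i - z$j)\<^sup>2) = 0"
    using laplacian_quadratic_form[OF assms(1), of z] laplacian_quadratic_nonneg[OF assms(1), of z]
    by simp
  then have "z$i = z$j" if "E i j" for i j
    using that by (simp add: sum_nonneg_eq_0_iff sum_nonneg neighbors_def)
  then have const: "z$i = z$j" for i j
    using connected_graph_const[OF assms(2), of "\<lambda>i. z$i"] by blast
  obtain a :: 'v where True
    by blast
  have "(\<Sum>i\<in>UNIV. z$i) = (\<Sum>i\<in>(UNIV::'v set). z$a)"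
    by (rule sum.cong[OF refl const])
  then have "(\<Sum>i\<in>UNIV. z$i) = real CARD('v) * z$a"
    by simp
  then have "z$i = 0" for i
    using assms(4) const[of i a] by simp
  then show False
    using assms(3) by (simp add: vec_eq_iff)
qed

lemma laplacian_zero_sum_eigenvalue:
  fixes E :: "'v::finite \<Rightarrow> 'v \<Rightarrow> bool"
  assumes "undirected_graph E" "connected_graph E" "CARD('v) \<ge> 2"
  obtains \<mu> where "real_eigenvalue (laplacian E) \<mu>" "\<mu> > 0"
    "\<And>z. (\<Sum>i\<in>UNIV. z$i) = 0 \<Longrightarrow> \<mu> * (z \<bullet> z) \<le> z \<bullet> (laplacian E *v z)"
proof -
  define Z where "Z = {z::real^'v. (\<Sum>i\<in>UNIV. z$i) = 0}"
  have "subspace Z"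
    by (auto simp: Z_def subspace_def sum.distrib sum_distrib_left[symmetric])
  have "\<not> CARD('v) \<le> Suc 0"
    using assms(3) by simp
  then obtain a b :: 'v where "a \<noteq> b"
    by (auto simp: card_le_Suc0_iff_eq)
  define e :: "real^'v" where "e = (\<chi> i. (if i = a then 1 else 0) - (if i = b then 1 else 0))"
  have "e \<in> Z"
    by (simp add: Z_def e_def sum_subtractf)
  moreover have "e $ a = 1"
    using \<open>a \<noteq> b\<close> by (simp add: e_def)
  ultimately have "Z \<noteq> {0}"
    by force
  then obtain z where z: "z \<in> Z" "z \<bullet> z = 1"
    and zmin: "\<And>v. v \<in> Z \<Longrightarrow> (z \<bullet> (laplacian E *v z)) * (v \<bullet> v) \<le> v \<bullet> (laplacian E *v v)"
    using quadratic_form_attains_min_on_subspace[OF \<open>subspace Z\<close>] by blast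
  have "laplacian E *v v \<in> Z" for v
    using sum_laplacian_mult_vec[OF assms(1)] by (simp add: Z_def)
  then have "laplacian E *v z = (z \<bullet> (laplacian E *v z)) *\<^sub>R z"
    using transpose_laplacian[OF assms(1)] \<open>subspace Z\<close> z zmin
    by (intro quadratic_form_minimizer_eigenvector)
  moreover have "z \<noteq> 0"
    using z(2) by auto
  ultimately show ?thesis
  proof (intro that)
    show "0 < z \<bullet> (laplacian E *v z)"
      using laplacian_quadratic_pos[OF assms(1,2) \<open>z \<noteq> 0\<close>] z(1) by (simp add: Z_def)
    show "z \<bullet> (laplacian E *v z) * (v \<bullet> v) \<le> v \<bullet> (laplacian E *v v)"
      if "(\<Sum>i\<in>UNIV. v$i) = 0" for v
      using zmin that by (simp add: Z_def)
  qed (auto simp: real_eigenvalue_def)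
qed

lemma lambda2_pos_and_rayleigh_bound:
  fixes E :: "'v::finite \<Rightarrow> 'v \<Rightarrow> bool"
  assumes "undirected_graph E" "connected_graph E" "CARD('v) \<ge> 2"
  shows "0 < lambda2 E"
    and "(\<Sum>i\<in>UNIV. z$i) = 0 \<Longrightarrow> lambda2 E * (z \<bullet> z) \<le> z \<bullet> (laplacian E *v z)"
proof -
  define S where "S = {\<mu>. real_eigenvalue (laplacian E) \<mu> \<and> \<mu> \<noteq> 0}"
  obtain \<mu> where \<mu>: "real_eigenvalue (laplacian E) \<mu>" "\<mu> > 0"
    and rayleigh: "\<And>z. (\<Sum>i\<in>UNIV. z$i) = 0 \<Longrightarrow> \<mu> * (z \<bullet> z) \<le> z \<bullet> (laplacian E *v z)"
    using laplacian_zero_sum_eigenvalue[OF assms] by blast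
  have "finite S"
    unfolding S_def using finite_real_eigenvalues_symmetric[OF transpose_laplacian[OF assms(1)]]
    by (rule rev_finite_subset) auto
  moreover have "\<mu> \<in> S"
    using \<mu> by (simp add: S_def)
  ultimately have "lambda2 E \<le> \<mu>" "lambda2 E \<in> S"
    unfolding lambda2_def S_def[symmetric] by (auto intro: Min_in)
  then obtain v where "v \<noteq> 0" "laplacian E *v v = lambda2 E *\<^sub>R v" "lambda2 E \<noteq> 0"
    unfolding S_def real_eigenvalue_def by blast
  moreover have "0 \<le> v \<bullet> (laplacian E *v v)"
    by (rule laplacian_quadratic_nonneg[OF assms(1)])
  moreover have "0 < v \<bullet> v"
    using \<open>v \<noteq> 0\<close> by simp
  ultimately show "0 < lambda2 E"
    by (simp add: zero_le_mult_iff order_less_le)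
  show "lambda2 E * (z \<bullet> z) \<le> z \<bullet> (laplacian E *v z)" if "(\<Sum>i\<in>UNIV. z$i) = 0"
    using mult_right_mono[OF \<open>lambda2 E \<le> \<mu>\<close> inner_ge_zero[of z]] rayleigh[OF that] by linarith
qed

lemma lambda2_sum_inner_le:
  fixes E :: "'v::finite \<Rightarrow> 'v \<Rightarrow> bool" and y :: "'v \<Rightarrow> real^'p::finite"
  assumes "undirected_graph E" "connected_graph E" "CARD('v) \<ge> 2" "(\<Sum>i\<in>UNIV. y i) = 0"
  shows "lambda2 E * (\<Sum>i\<in>UNIV. y i \<bullet> y i) \<le> (\<Sum>i\<in>UNIV. \<Sum>j\<in>neighbors E i. y i \<bullet> (y i - y j))"
proof -
  define z where "z k = (\<chi> i. y i $ k)" for k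
  have "(\<Sum>i\<in>UNIV. z k $ i) = 0" for k
    using assms(4) by (simp add: z_def flip: sum_component)
  then have each: "lambda2 E * (z k \<bullet> z k) \<le> z k \<bullet> (laplacian E *v z k)" for k
    by (rule lambda2_pos_and_rayleigh_bound(2)[OF assms(1-3)])
  have "(\<Sum>i\<in>UNIV. y i \<bullet> y i) = (\<Sum>i\<in>UNIV. \<Sum>k\<in>UNIV. y i $ k * y i $ k)"
    by (simp add: inner_vec_def)
  also have "\<dots> = (\<Sum>k\<in>UNIV. z k \<bullet> z k)"
    by (subst sum.swap) (simp add: inner_vec_def z_def)
  finally have "lambda2 E * (\<Sum>i\<in>UNIV. y i \<bullet> y i) \<le> (\<Sum>k\<in>UNIV. z k \<bullet> (laplacian E *v z k))"
    using sum_mono[of UNIV, OF each] by (simp add: sum_distrib_left)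
  also have "\<dots> = (\<Sum>k\<in>UNIV. \<Sum>i\<in>UNIV. \<Sum>j\<in>neighbors E i. y i $ k * (y i $ k - y j $ k))"
    by (simp add: inner_laplacian_eq_sum z_def)
  also have "\<dots> = (\<Sum>i\<in>UNIV. \<Sum>k\<in>UNIV. \<Sum>j\<in>neighbors E i. y i $ k * (y i $ k - y j $ k))"
    by (rule sum.swap)
  also have "\<dots> = (\<Sum>i\<in>UNIV. \<Sum>j\<in>neighbors E i. \<Sum>k\<in>UNIV. y i $ k * (y i $ k - y j $ k))"
    by (intro sum.cong refl sum.swap)
  also have "\<dots> = (\<Sum>i\<in>UNIV. \<Sum>j\<in>neighbors E i. y i \<bullet> (y i - y j))"
    by (simp add: inner_vec_def)
  finally show ?thesis .
qed

lemma laplacian_coupling_bound: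
  fixes E :: "'v::finite \<Rightarrow> 'v \<Rightarrow> bool" and y :: "'v \<Rightarrow> real^'p::finite"
  assumes "undirected_graph E" "connected_graph E" "(\<Sum>i\<in>UNIV. y i) = 0"
    and "c1 \<ge> 1 / (2 * lambda2 E)"
  shows "(\<Sum>i\<in>UNIV. y i \<bullet> y i) \<le> 2 * c1 * (\<Sum>i\<in>UNIV. \<Sum>j\<in>neighbors E i. y i \<bullet> (y i - y j))"
proof (cases "CARD('v) \<ge> 2")
  case True
  have "0 < lambda2 E"
    by (rule lambda2_pos_and_rayleigh_bound(1)[OF assms(1,2) True])
  then have "1 \<le> 2 * c1 * lambda2 E" "0 \<le> c1"
    using assms(4) order_trans[OF _ assms(4), of 0]
    by (simp_all add: pos_divide_le_eq mult.commute mult.left_commute)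
  have "(\<Sum>i\<in>UNIV. y i \<bullet> y i) \<le> (2 * c1 * lambda2 E) * (\<Sum>i\<in>UNIV. y i \<bullet> y i)"
    using mult_right_mono[OF \<open>1 \<le> 2 * c1 * lambda2 E\<close>, of "\<Sum>i\<in>UNIV. y i \<bullet> y i"]
    by (simp add: sum_nonneg)
  also have "\<dots> = 2 * c1 * (lambda2 E * (\<Sum>i\<in>UNIV. y i \<bullet> y i))"
    by simp
  also have "\<dots> \<le> 2 * c1 * (\<Sum>i\<in>UNIV. \<Sum>j\<in>neighbors E i. y i \<bullet> (y i - y j))"
    using lambda2_sum_inner_le[OF assms(1,2) True assms(3)] \<open>0 \<le> c1\<close> by (simp add: mult_left_mono)
  finally show ?thesis .
next
  case False
  then have "CARD('v) \<le> Suc 0"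
    by simp
  then have single: "UNIV = {i}" for i :: 'v
    by (auto simp: card_le_Suc0_iff_eq)
  have "y i = 0" for i
    using assms(3) by (subst (asm) single[of i]) simp
  then show ?thesis
    by simp
qed

section \<open>Differential inequalities\<close>

lemma nonpos_derivative_imp_le:
  fixes W W' :: "real \<Rightarrow> real"
  assumes "\<And>t. t \<ge> t0 \<Longrightarrow> (W has_real_derivative W' t) (at t within {t0..})"
    and "\<And>t. t \<ge> t0 \<Longrightarrow> W' t \<le> 0" and "t \<ge> t0"
  shows "W t \<le> W t0"
proof -
  have "\<exists>x\<in>{t0..t}. W t - W t0 = (\<lambda>h. W' x * h) (t - t0)"
  proof (rule mvt_very_simple[OF assms(3)])
    fix x assume "t0 \<le> x" "x \<le> t"
    then have "(W has_real_derivative W' x) (at x within {t0..t})"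
      using assms(1)[of x] by (rule_tac has_field_derivative_subset) auto
    then show "(W has_derivative (\<lambda>h. W' x * h)) (at x within {t0..t})"
      by (simp add: has_field_derivative_def)
  qed
  then obtain x where "x \<in> {t0..t}" "W t - W t0 = W' x * (t - t0)"
    by auto
  moreover have "W' x * (t - t0) \<le> 0"
    using assms(2)[of x] \<open>x \<in> {t0..t}\<close> by (intro mult_nonpos_nonneg) auto
  ultimately show ?thesis
    by linarith
qed

lemma has_real_derivative_quadratic_form:
  fixes z :: "real \<Rightarrow> real^'n::finite" and P :: "real^'n^'n"
  assumes "transpose P = P" and "(z has_vector_derivative z') (at t within S)"
  shows "((\<lambda>t. z t \<bullet> (P *v z t)) has_real_derivative 2 * ((P *v z t) \<bullet> z')) (at t within S)"
proof -
  have "((\<lambda>t. P *v z t) has_vector_derivative P *v z') (at t within S)"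
    by (rule bounded_linear.has_vector_derivative[OF matrix_vector_mul_bounded_linear assms(2)])
  then have "((\<lambda>t. z t \<bullet> (P *v z t)) has_vector_derivative z t \<bullet> (P *v z') + z' \<bullet> (P *v z t))
      (at t within S)"
    by (rule bounded_bilinear.has_vector_derivative[OF bounded_bilinear_inner assms(2)])
  moreover have "z t \<bullet> (P *v z') = (P *v z t) \<bullet> z'"
    using inner_matrix_vector_transpose[of "z t" P z'] assms(1) by simp
  ultimately show ?thesis
    by (simp add: has_real_derivative_iff_has_vector_derivative inner_commute)
qed

text \<open>If b bounds the quadratic form of A, then exp (-2 b t) \<parallel>z t\<parallel>^2 is nonincreasing.\<close>

lemma linear_ode_solution_eq_0:
  fixes z :: "real \<Rightarrow> real^'n::finite" and A :: "real^'n^'n"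
  assumes "\<And>t. t \<ge> t0 \<Longrightarrow> (z has_vector_derivative A *v z t) (at t within {t0..})"
    and "z t0 = 0" and "t \<ge> t0"
  shows "z t = 0"
proof -
  obtain b where "b > 0" and b: "\<And>v. v \<bullet> (A *v v) \<le> b * (v \<bullet> v)"
    using quadratic_form_upper_bound[of A] by blast
  define W where "W t = exp (- 2 * b * t) * (z t \<bullet> z t)" for t
  define W' where "W' t = exp (- 2 * b * t) * (2 * (z t \<bullet> (A *v z t)) - 2 * b * (z t \<bullet> z t))" for t
  have "(W has_real_derivative W' t) (at t within {t0..})" if "t \<ge> t0" for t
  proof -
    have "((\<lambda>t. z t \<bullet> (mat 1 *v z t)) has_real_derivative 2 * ((mat 1 *v z t) \<bullet> (A *v z t)))
        (at t within {t0..})"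
      by (intro has_real_derivative_quadratic_form assms(1) that) simp
    then have "((\<lambda>t. z t \<bullet> z t) has_real_derivative 2 * (z t \<bullet> (A *v z t))) (at t within {t0..})"
      by simp
    then show ?thesis
      unfolding W_def[abs_def] W'_def
      by (auto intro!: derivative_eq_intros simp: algebra_simps)
  qed
  moreover have "W' t \<le> 0" for t
    using b[of "z t"] by (simp add: W'_def mult_nonneg_nonpos)
  ultimately have "W t \<le> W t0"
    using nonpos_derivative_imp_le assms(3) by blast
  then have "z t \<bullet> z t \<le> 0"
    using assms(2) by (simp add: W_def mult_le_0_iff)
  then show ?thesis
    by (metis inner_eq_zero_iff inner_ge_zero order_antisym)
qed

lemma sum_linear_ode_solutions_eq_0:
  fixes s :: "'v::finite \<Rightarrow> real \<Rightarrow> real^'n::finite" and u :: "'v \<Rightarrow> real \<Rightarrow> real^'p::finite"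
  assumes "\<And>i t. t \<ge> t0 \<Longrightarrow> (s i has_vector_derivative A *v s i t + B *v u i t) (at t within {t0..})"
    and "\<And>t. t \<ge> t0 \<Longrightarrow> (\<Sum>i\<in>UNIV. u i t) = 0" and "\<And>i. s i t0 = 0" and "t \<ge> t0"
  shows "(\<Sum>i\<in>UNIV. s i t) = 0"
proof -
  have "((\<lambda>t. \<Sum>i\<in>UNIV. s i t) has_vector_derivative A *v (\<Sum>i\<in>UNIV. s i t)) (at t within {t0..})"
    if "t \<ge> t0" for t
  proof -
    have "((\<lambda>t. \<Sum>i\<in>UNIV. s i t) has_vector_derivative (\<Sum>i\<in>UNIV. A *v s i t + B *v u i t))
        (at t within {t0..})"
      by (intro has_vector_derivative_sum assms(1) that)
    then show ?thesis
      using assms(2)[OF that] by (simp add: sum.distrib flip: matrix_vector_mult_sum)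
  qed
  then show ?thesis
    by (rule linear_ode_solution_eq_0[where z = "\<lambda>t. \<Sum>i\<in>UNIV. s i t"]) (simp_all add: assms(3,4))
qed

lemma has_vector_derivative_deviation_from_mean:
  fixes y :: "real \<Rightarrow> real^'n::finite" and r :: "'v::finite \<Rightarrow> real \<Rightarrow> real^'n"
    and A :: "real^'n^'n" and B :: "real^'p::finite^'n"
  assumes "(y has_vector_derivative A *v y t + B *v v) (at t within S)"
    and "\<And>k. (r k has_vector_derivative A *v r k t + B *v f k) (at t within S)"
  defines "m \<equiv> \<lambda>t. (1 / real CARD('v)) *\<^sub>R (\<Sum>k\<in>UNIV. r k t)"
  shows "((\<lambda>t. y t - m t) has_vector_derivative
      A *v (y t - m t) + B *v (v - (1 / real CARD('v)) *\<^sub>R (\<Sum>k\<in>UNIV. f k))) (at t within S)"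
proof -
  have "(m has_vector_derivative (1 / real CARD('v)) *\<^sub>R (\<Sum>k\<in>UNIV. A *v r k t + B *v f k))
      (at t within S)"
    unfolding m_def
    by (intro bounded_linear.has_vector_derivative[OF bounded_linear_scaleR_right]
        has_vector_derivative_sum assms(2))
  then have "((\<lambda>t. y t - m t) has_vector_derivative (A *v y t + B *v v)
      - (1 / real CARD('v)) *\<^sub>R (\<Sum>k\<in>UNIV. A *v r k t + B *v f k)) (at t within S)"
    by (intro has_vector_derivative_diff assms(1))
  then show ?thesis
    by (simp add: m_def sum.distrib matrix_vector_mult_diff_distrib matrix_vector_mult_scaleR
        scaleR_right_distrib algebra_simps flip: matrix_vector_mult_sum)
qed

lemma differential_inequality_exp_bound:
  fixes V V' :: "real \<Rightarrow> real"
  assumes "\<And>t. t \<ge> t0 \<Longrightarrow> (V has_real_derivative V' t) (at t within {t0..})"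
    and "\<And>t. t \<ge> t0 \<Longrightarrow> V' t \<le> - \<alpha> * V t + C * exp (- \<phi> * t)"
    and "\<And>t. t \<ge> t0 \<Longrightarrow> 0 \<le> V t"
    and "\<alpha> > 0" "\<phi> > 0" "C \<ge> 0"
  obtains \<beta> c where "\<beta> > 0" "\<And>t. t \<ge> t0 \<Longrightarrow> V t \<le> c * exp (- \<beta> * t)"
proof -
  define \<beta> where "\<beta> = min \<alpha> (\<phi> / 2)"
  have "\<beta> > 0" "\<beta> \<le> \<alpha>" "\<phi> - \<beta> > 0"
    using assms(4,5) by (auto simp: \<beta>_def)
  define D where "D = C / (\<phi> - \<beta>)"
  have "D \<ge> 0" "D * (\<phi> - \<beta>) = C"
    using assms(6) \<open>\<phi> - \<beta> > 0\<close> by (simp_all add: D_def field_simps)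
  \<comment> \<open>the second summand of W absorbs the forcing term, so W is nonincreasing\<close>
  define W where "W t = exp (\<beta> * t) * V t + D * exp ((\<beta> - \<phi>) * t)" for t
  define W' where "W' t = exp (\<beta> * t) * (\<beta> * V t + V' t) - D * (\<phi> - \<beta>) * exp ((\<beta> - \<phi>) * t)"
    for t
  have "(W has_real_derivative W' t) (at t within {t0..})" if "t \<ge> t0" for t
    unfolding W_def[abs_def] W'_def
    by (auto intro!: derivative_eq_intros assms(1)[OF that] simp: algebra_simps)
  moreover have "W' t \<le> 0" if "t \<ge> t0" for t
  proof -
    have "\<beta> * V t + V' t \<le> C * exp (- \<phi> * t)"
      using assms(2,3)[OF that] mult_right_mono[OF \<open>\<beta> \<le> \<alpha>\<close> assms(3)[OF that]] by linarith
    then have "exp (\<beta> * t) * (\<beta> * V t + V' t) \<le> exp (\<beta> * t) * (C * exp (- \<phi> * t))"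
      by (intro mult_left_mono) auto
    then show ?thesis
      unfolding W'_def \<open>D * (\<phi> - \<beta>) = C\<close>
      by (simp add: mult.left_commute flip: exp_add) (simp add: algebra_simps)
  qed
  ultimately have "W t \<le> W t0" if "t \<ge> t0" for t
    using nonpos_derivative_imp_le that by blast
  then have scaled: "exp (\<beta> * t) * V t \<le> W t0" if "t \<ge> t0" for t
    using that \<open>D \<ge> 0\<close> unfolding W_def by (smt (verit) exp_gt_zero mult_nonneg_nonneg)
  have "V t \<le> W t0 * exp (- \<beta> * t)" if "t \<ge> t0" for t
  proof -
    have "V t = exp (- \<beta> * t) * (exp (\<beta> * t) * V t)"
      by (simp add: mult.assoc[symmetric] flip: exp_add)
    also have "\<dots> \<le> exp (- \<beta> * t) * W t0"
      by (intro mult_left_mono scaled that) simp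
    finally show ?thesis
      by (simp add: mult.commute)
  qed
  then show ?thesis
    using that \<open>\<beta> > 0\<close> by blast
qed

lemma differential_inequality_tendsto_0:
  fixes V V' :: "real \<Rightarrow> real"
  assumes "\<And>t. t \<ge> t0 \<Longrightarrow> (V has_real_derivative V' t) (at t within {t0..})"
    and "\<And>t. t \<ge> t0 \<Longrightarrow> V' t \<le> - \<alpha> * V t + C * exp (- \<phi> * t)"
    and "\<And>t. t \<ge> t0 \<Longrightarrow> 0 \<le> V t"
    and "\<alpha> > 0" "\<phi> > 0" "C \<ge> 0"
  shows "(V \<longlongrightarrow> 0) at_top"
proof -
  obtain \<beta> c where "\<beta> > 0" and bound: "\<And>t. t \<ge> t0 \<Longrightarrow> V t \<le> c * exp (- \<beta> * t)"
    using differential_inequality_exp_bound[OF assms] by metis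
  have "((\<lambda>t. c * exp (- \<beta> * t)) \<longlongrightarrow> 0) at_top"
    using \<open>\<beta> > 0\<close> by real_asymp
  then show ?thesis
  proof (rule tendsto_sandwich[OF _ _ tendsto_const, rotated 2])
    show "\<forall>\<^sub>F t in at_top. 0 \<le> V t"
      using assms(3) by (auto simp: eventually_at_top_linorder)
    show "\<forall>\<^sub>F t in at_top. V t \<le> c * exp (- \<beta> * t)"
      using bound by (auto simp: eventually_at_top_linorder)
  qed
qed

lemma quadratic_lyapunov_tendsto_0:
  fixes \<xi> \<xi>' :: "'v::finite \<Rightarrow> real \<Rightarrow> real^'n::finite" and P Q :: "real^'n^'n"
  assumes "sym_pos_def P" "sym_pos_def Q"
    and deriv: "\<And>i t. t \<ge> t0 \<Longrightarrow> (\<xi> i has_vector_derivative \<xi>' i t) (at t within {t0..})"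
    and decrease: "\<And>t. t \<ge> t0 \<Longrightarrow> (\<Sum>i\<in>UNIV. 2 * ((P *v \<xi> i t) \<bullet> \<xi>' i t))
        \<le> - (\<Sum>i\<in>UNIV. \<xi> i t \<bullet> (Q *v \<xi> i t)) + C * exp (- \<phi> * t)"
    and "C \<ge> 0" "\<phi> > 0"
  shows "((\<lambda>t. norm (\<xi> i t)) \<longlongrightarrow> 0) at_top"
proof -
  define V where "V t = (\<Sum>k\<in>UNIV. \<xi> k t \<bullet> (P *v \<xi> k t))" for t
  obtain q where "q > 0" and q: "\<And>x. q * (x \<bullet> x) \<le> x \<bullet> (Q *v x)"
    using sym_pos_def_lower_bound[OF assms(2)] by metis
  obtain p where "p > 0" and p: "\<And>x. p * (x \<bullet> x) \<le> x \<bullet> (P *v x)"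
    using sym_pos_def_lower_bound[OF assms(1)] by metis
  obtain b where "b > 0" and b: "\<And>x. x \<bullet> (P *v x) \<le> b * (x \<bullet> x)"
    using quadratic_form_upper_bound[of P] by metis
  have "transpose P = P"
    using assms(1) by (simp add: sym_pos_def_def)
  have dV: "(V has_real_derivative (\<Sum>k\<in>UNIV. 2 * ((P *v \<xi> k t) \<bullet> \<xi>' k t))) (at t within {t0..})"
    if "t \<ge> t0" for t
    unfolding V_def[abs_def]
    by (intro DERIV_sum has_real_derivative_quadratic_form \<open>transpose P = P\<close> deriv that)
  moreover have dec: "(\<Sum>k\<in>UNIV. 2 * ((P *v \<xi> k t) \<bullet> \<xi>' k t)) \<le> - (q / b) * V t + C * exp (- \<phi> * t)"
    if "t \<ge> t0" for t
  proof -
    have "(q / b) * V t \<le> (q / b) * (b * (\<Sum>k\<in>UNIV. \<xi> k t \<bullet> \<xi> k t))"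
      unfolding V_def sum_distrib_left using \<open>q > 0\<close> \<open>b > 0\<close>
      by (intro mult_left_mono sum_mono b) auto
    also have "\<dots> \<le> (\<Sum>k\<in>UNIV. \<xi> k t \<bullet> (Q *v \<xi> k t))"
      using \<open>b > 0\<close> by (simp add: sum_distrib_left sum_mono q)
    finally show ?thesis
      using decrease[OF that] by linarith
  qed
  moreover have P_nonneg: "0 \<le> x \<bullet> (P *v x)" for x
    using p[of x] \<open>p > 0\<close> by (smt (verit) inner_ge_zero mult_nonneg_nonneg)
  then have "0 \<le> V t" for t
    unfolding V_def by (intro sum_nonneg)
  ultimately have "(V \<longlongrightarrow> 0) at_top"
    using \<open>q > 0\<close> \<open>b > 0\<close> assms(5,6) by (intro differential_inequality_tendsto_0[OF dV dec]) auto
  then have "((\<lambda>t. sqrt (V t / p)) \<longlongrightarrow> sqrt (0 / p)) at_top"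
    using \<open>p > 0\<close> by (intro tendsto_real_sqrt tendsto_divide tendsto_const) auto
  then have lim: "((\<lambda>t. sqrt (V t / p)) \<longlongrightarrow> 0) at_top"
    by simp
  have bound: "norm (\<xi> i t) \<le> sqrt (V t / p)" for t
  proof -
    have "p * (\<xi> i t \<bullet> \<xi> i t) \<le> \<xi> i t \<bullet> (P *v \<xi> i t)"
      by (rule p)
    also have "\<dots> \<le> V t"
      unfolding V_def by (rule member_le_sum) (simp_all add: P_nonneg)
    finally have "\<xi> i t \<bullet> \<xi> i t \<le> V t / p"
      using \<open>p > 0\<close> by (simp add: field_simps)
    then show ?thesis
      by (simp add: norm_eq_sqrt_inner real_sqrt_le_mono)
  qed
  from lim show ?thesis
  proof (rule tendsto_sandwich[OF _ _ tendsto_const, rotated 2])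
    show "\<forall>\<^sub>F t in at_top. 0 \<le> norm (\<xi> i t)"
      by simp
    show "\<forall>\<^sub>F t in at_top. norm (\<xi> i t) \<le> sqrt (V t / p)"
      using bound by simp
  qed
qed

section \<open>The static algorithm\<close>

lemma hbl_uminus: "hbl \<epsilon> \<phi> (- \<omega>) \<tau> = - hbl \<epsilon> \<phi> \<omega> \<tau>"
  by (simp add: hbl_def)

lemma inner_hbl_ge:
  assumes "\<epsilon> * exp (- \<phi> * \<tau>) > 0"
  shows "norm \<omega> - \<epsilon> * exp (- \<phi> * \<tau>) \<le> \<omega> \<bullet> hbl \<epsilon> \<phi> \<omega> \<tau>"
proof -
  define \<delta> where "\<delta> = \<epsilon> * exp (- \<phi> * \<tau>)"
  have "norm \<omega> + \<delta> > 0"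
    using assms by (simp add: \<delta>_def add_nonneg_pos)
  moreover have "(norm \<omega> - \<delta>) * (norm \<omega> + \<delta>) \<le> (norm \<omega>)\<^sup>2"
    by (simp add: algebra_simps power2_eq_square)
  ultimately have "norm \<omega> - \<delta> \<le> (norm \<omega>)\<^sup>2 / (norm \<omega> + \<delta>)"
    by (simp add: pos_le_divide_eq)
  then show ?thesis
    by (simp add: hbl_def \<delta>_def power2_norm_eq_inner)
qed

lemma boundary_layer_dominates_disturbance:
  fixes E :: "'v::finite \<Rightarrow> 'v \<Rightarrow> bool" and y d :: "'v \<Rightarrow> real^'p::finite"
  assumes "undirected_graph E" "connected_graph E" "(\<Sum>i\<in>UNIV. y i) = 0"
    and "\<And>i. norm (d i) \<le> f0" "c2 \<ge> f0 * (real CARD('v) - 1)" "\<epsilon> * exp (- \<phi> * \<tau>) > 0"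
  shows "2 * (\<Sum>i\<in>UNIV. y i \<bullet> d i) - 2 * c2 * (\<Sum>i\<in>UNIV. \<Sum>j\<in>neighbors E i. y i \<bullet> hbl \<epsilon> \<phi> (y i - y j) \<tau>)
    \<le> c2 * (\<epsilon> * exp (- \<phi> * \<tau>)) * (\<Sum>i\<in>UNIV. real (card (neighbors E i)))"
proof -
  define \<delta> where "\<delta> = \<epsilon> * exp (- \<phi> * \<tau>)"
  define T where "T = (\<Sum>i\<in>UNIV. \<Sum>j\<in>neighbors E i. norm (y i - y j))"
  have "0 \<le> f0"
    using assms(4)[of undefined] by (meson norm_ge_zero order_trans)
  moreover have "0 \<le> real CARD('v) - 1"
    by (simp add: Suc_le_eq)
  ultimately have "0 \<le> c2"
    using assms(5) by (meson mult_nonneg_nonneg order_trans)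
  have "2 * (\<Sum>i\<in>UNIV. \<Sum>j\<in>neighbors E i. y i \<bullet> hbl \<epsilon> \<phi> (y i - y j) \<tau>)
      = (\<Sum>i\<in>UNIV. \<Sum>j\<in>neighbors E i. (y i - y j) \<bullet> hbl \<epsilon> \<phi> (y i - y j) \<tau>)"
    by (rule sum_neighbors_inner_odd[OF assms(1)]) (rule hbl_uminus)
  also have "\<dots> \<ge> (\<Sum>i\<in>UNIV. \<Sum>j\<in>neighbors E i. norm (y i - y j) - \<delta>)"
    unfolding \<delta>_def by (intro sum_mono inner_hbl_ge assms(6))
  finally have coupling: "T - \<delta> * (\<Sum>i\<in>UNIV. real (card (neighbors E i)))
      \<le> 2 * (\<Sum>i\<in>UNIV. \<Sum>j\<in>neighbors E i. y i \<bullet> hbl \<epsilon> \<phi> (y i - y j) \<tau>)"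
    by (simp add: T_def sum_subtractf sum_distrib_left mult.commute)
  have "y i \<bullet> d i \<le> f0 * norm (y i)" for i
  proof -
    have "y i \<bullet> d i \<le> norm (y i) * norm (d i)"
      by (rule norm_cauchy_schwarz)
    also have "\<dots> \<le> norm (y i) * f0"
      by (intro mult_left_mono assms(4)) simp
    finally show ?thesis
      by (simp add: mult.commute)
  qed
  then have "(\<Sum>i\<in>UNIV. y i \<bullet> d i) \<le> f0 * (\<Sum>i\<in>UNIV. norm (y i))"
    by (simp add: sum_mono sum_distrib_left)
  then have "2 * (\<Sum>i\<in>UNIV. y i \<bullet> d i) \<le> f0 * (2 * (\<Sum>i\<in>UNIV. norm (y i)))"
    by linarith
  also have "\<dots> \<le> f0 * ((real CARD('v) - 1) * T)"
    unfolding T_def by (intro mult_left_mono sum_norm_le_neighbors_sum assms(1-3) \<open>0 \<le> f0\<close>)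
  also have "\<dots> \<le> c2 * T"
    using assms(5) by (simp add: T_def mult.assoc[symmetric] mult_right_mono sum_nonneg)
  finally show ?thesis
    using mult_left_mono[OF coupling \<open>0 \<le> c2\<close>] by (simp add: \<delta>_def algebra_simps)
qed

text \<open>The input u_i of (SA) when every local clock reads \<tau> and the agents are in the states z.\<close>

definition static_input ::
    "('v \<Rightarrow> 'v \<Rightarrow> bool) \<Rightarrow> real^'n^'p \<Rightarrow> real \<Rightarrow> real \<Rightarrow> real \<Rightarrow> real \<Rightarrow> real
      \<Rightarrow> ('v \<Rightarrow> real^'n) \<Rightarrow> 'v \<Rightarrow> real^'p" where
  "static_input E K c1 c2 \<epsilon> \<phi> \<tau> z i =
     c1 *\<^sub>R (\<Sum>j\<in>neighbors E i. K *v (z i - z j))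
     + c2 *\<^sub>R (\<Sum>j\<in>neighbors E i. hbl \<epsilon> \<phi> (K *v (z i - z j)) \<tau>)"

lemma static_input_translate:
  "static_input E K c1 c2 \<epsilon> \<phi> \<tau> (\<lambda>j. z j - c) i = static_input E K c1 c2 \<epsilon> \<phi> \<tau> z i"
  by (simp add: static_input_def)

lemma sum_static_input_eq_0:
  fixes E :: "'v::finite \<Rightarrow> 'v \<Rightarrow> bool"
  assumes "undirected_graph E"
  shows "(\<Sum>i\<in>UNIV. static_input E K c1 c2 \<epsilon> \<phi> \<tau> z i) = 0"
proof -
  have odd: "K *v (z j - z i) = - (K *v (z i - z j))" for i j
    by (simp add: matrix_vector_mult_diff_distrib)
  have "(\<Sum>i\<in>UNIV. \<Sum>j\<in>neighbors E i. K *v (z i - z j)) = 0"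
    by (rule sum_neighbors_antisym_eq_0[OF assms odd])
  moreover have "(\<Sum>i\<in>UNIV. \<Sum>j\<in>neighbors E i. hbl \<epsilon> \<phi> (K *v (z i - z j)) \<tau>) = 0"
    by (rule sum_neighbors_antisym_eq_0[OF assms]) (subst odd, rule hbl_uminus)
  ultimately show ?thesis
    by (simp add: static_input_def sum.distrib flip: scaleR_sum_right)
qed

text \<open>With y_i = B^T P \<xi>_i the Riccati equation turns 2 (P \<xi>_i) \<bullet> (A \<xi>_i + B w_i) into
  \<parallel>y_i\<parallel>^2 - \<xi>_i \<bullet> Q \<xi>_i + 2 y_i \<bullet> w_i. The linear coupling absorbs \<Sum>_i \<parallel>y_i\<parallel>^2, the
  boundary layer absorbs the disturbances d_i, and the offset F drops out because \<Sum>_i y_i = 0.\<close>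

lemma static_input_lyapunov_bound:
  fixes E :: "'v::finite \<Rightarrow> 'v \<Rightarrow> bool" and A P Q :: "real^'n::finite^'n"
    and B :: "real^'p::finite^'n" and \<xi> :: "'v \<Rightarrow> real^'n" and d :: "'v \<Rightarrow> real^'p"
  assumes G: "undirected_graph E" "connected_graph E"
    and "transpose P = P"
    and riccati: "P ** A + transpose A ** P - P ** B ** transpose B ** P + Q = 0"
    and K: "K = - (transpose B ** P)"
    and c1: "c1 \<ge> 1 / (2 * lambda2 E)" and c2: "c2 \<ge> f0 * (real CARD('v) - 1)"
    and \<delta>: "\<epsilon> * exp (- \<phi> * \<tau>) > 0"
    and \<xi>_sum: "(\<Sum>i\<in>UNIV. \<xi> i) = 0" and d: "\<And>i. norm (d i) \<le> f0"
  shows "(\<Sum>i\<in>UNIV. 2 * ((P *v \<xi> i) \<bullet> (A *v \<xi> i + B *v (static_input E K c1 c2 \<epsilon> \<phi> \<tau> \<xi> i + d i - F))))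
    \<le> - (\<Sum>i\<in>UNIV. \<xi> i \<bullet> (Q *v \<xi> i))
      + c2 * (\<epsilon> * exp (- \<phi> * \<tau>)) * (\<Sum>i\<in>UNIV. real (card (neighbors E i)))"
proof -
  define y where "y i = (transpose B ** P) *v \<xi> i" for i
  have y_sum: "(\<Sum>i\<in>UNIV. y i) = 0"
    using \<xi>_sum by (simp add: y_def flip: matrix_vector_mult_sum)
  have "static_input E K c1 c2 \<epsilon> \<phi> \<tau> \<xi> i
      = - (c1 *\<^sub>R (\<Sum>j\<in>neighbors E i. y i - y j)
           + c2 *\<^sub>R (\<Sum>j\<in>neighbors E i. hbl \<epsilon> \<phi> (y i - y j) \<tau>))" for i
  proof -
    have "K *v (\<xi> i - \<xi> j) = - (y i - y j)" for j
      by (simp add: K y_def uminus_matrix_vector_mult matrix_vector_mult_diff_distrib)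
    then show ?thesis
      by (simp only: static_input_def hbl_uminus sum_negf scaleR_minus_right minus_add_distrib)
  qed
  then have y_input: "y i \<bullet> static_input E K c1 c2 \<epsilon> \<phi> \<tau> \<xi> i
      = - c1 * (\<Sum>j\<in>neighbors E i. y i \<bullet> (y i - y j))
        - c2 * (\<Sum>j\<in>neighbors E i. y i \<bullet> hbl \<epsilon> \<phi> (y i - y j) \<tau>)" for i
    by (simp add: inner_diff_right inner_sum_right)
  have each: "2 * ((P *v \<xi> i) \<bullet> (A *v \<xi> i + B *v w))
      = y i \<bullet> y i - \<xi> i \<bullet> (Q *v \<xi> i) + 2 * (y i \<bullet> w)" for i w
    using riccati_quadratic_form[OF \<open>transpose P = P\<close> riccati, of "\<xi> i"]
      inner_matrix_vector_transpose[of "P *v \<xi> i" B w]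
    by (simp add: y_def inner_add_right matrix_vector_mul_assoc)
  have "(\<Sum>i\<in>UNIV. y i \<bullet> F) = 0"
    using y_sum by (simp flip: inner_sum_left)
  have "(\<Sum>i\<in>UNIV. 2 * ((P *v \<xi> i) \<bullet> (A *v \<xi> i + B *v (static_input E K c1 c2 \<epsilon> \<phi> \<tau> \<xi> i + d i - F))))
      = (\<Sum>i\<in>UNIV. y i \<bullet> y i - \<xi> i \<bullet> (Q *v \<xi> i)
          + 2 * (y i \<bullet> static_input E K c1 c2 \<epsilon> \<phi> \<tau> \<xi> i) + 2 * (y i \<bullet> d i) - 2 * (y i \<bullet> F))"
    by (simp only: each) (simp add: inner_add_right inner_diff_right algebra_simps)
  also have "\<dots> = ((\<Sum>i\<in>UNIV. y i \<bullet> y i) - 2 * c1 * (\<Sum>i\<in>UNIV. \<Sum>j\<in>neighbors E i. y i \<bullet> (y i - y j)))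
        - (\<Sum>i\<in>UNIV. \<xi> i \<bullet> (Q *v \<xi> i))
        + (2 * (\<Sum>i\<in>UNIV. y i \<bullet> d i)
           - 2 * c2 * (\<Sum>i\<in>UNIV. \<Sum>j\<in>neighbors E i. y i \<bullet> hbl \<epsilon> \<phi> (y i - y j) \<tau>))"
    unfolding y_input sum.distrib sum_subtractf \<open>(\<Sum>i\<in>UNIV. y i \<bullet> F) = 0\<close>
      sum_distrib_left[symmetric]
    by (simp add: sum_subtractf sum_distrib_left[symmetric] algebra_simps)
  also have "\<dots> \<le> 0 - (\<Sum>i\<in>UNIV. \<xi> i \<bullet> (Q *v \<xi> i))
      + c2 * (\<epsilon> * exp (- \<phi> * \<tau>)) * (\<Sum>i\<in>UNIV. real (card (neighbors E i)))"
    using laplacian_coupling_bound[OF G y_sum c1]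
      boundary_layer_dominates_disturbance[OF G y_sum d c2 \<delta>]
    by (intro add_mono diff_mono) auto
  finally show ?thesis
    by simp
qed

locale static_algorithm =
  fixes E :: "'v::finite \<Rightarrow> 'v \<Rightarrow> bool"
    and A :: "real^'n::finite^'n" and B :: "real^'p::finite^'n" and K :: "real^'n^'p"
    and r s x :: "'v \<Rightarrow> real \<Rightarrow> real^'n"
    and f u :: "'v \<Rightarrow> real \<Rightarrow> real^'p"
    and tloc :: "'v \<Rightarrow> real \<Rightarrow> real"
    and t0 \<eta> \<epsilon> \<phi> c1 c2 :: real
  assumes undirected: "undirected_graph E"
    and r_ode: "\<And>i t. t \<ge> t0 \<Longrightarrow>
        (r i has_vector_derivative (A *v r i t + B *v f i t)) (at t within {t0..})"
    and clocks: "\<And>i t. t \<ge> t0 \<Longrightarrow> tloc i t = t + \<eta>"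
    and x_def: "\<And>i t. x i t = s i t + r i t"
    and u_def: "\<And>i t. u i t =
        c1 *\<^sub>R (\<Sum>j\<in>neighbors E i. K *v (x i t - x j t))
      + c2 *\<^sub>R (\<Sum>j\<in>neighbors E i. hbl \<epsilon> \<phi> (K *v (x i t - x j t)) (tloc i t))"
    and s_ode: "\<And>i t. t \<ge> t0 \<Longrightarrow>
        (s i has_vector_derivative (A *v s i t + B *v u i t)) (at t within {t0..})"
    and s_init: "\<And>i. s i t0 = 0"
begin

definition deviation :: "'v \<Rightarrow> real \<Rightarrow> real^'n" where
  "deviation i t = x i t - (1 / real CARD('v)) *\<^sub>R (\<Sum>k\<in>UNIV. r k t)"

definition mean_disturbance :: "real \<Rightarrow> real^'p" where
  "mean_disturbance t = (1 / real CARD('v)) *\<^sub>R (\<Sum>k\<in>UNIV. f k t)"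

lemma input_eq_static_input:
  assumes "t \<ge> t0"
  shows "u i t = static_input E K c1 c2 \<epsilon> \<phi> (t + \<eta>) (\<lambda>j. deviation j t) i"
  unfolding deviation_def static_input_translate
  by (simp add: u_def static_input_def clocks[OF assms])

lemma sum_deviation_eq_0:
  assumes "t \<ge> t0"
  shows "(\<Sum>i\<in>UNIV. deviation i t) = 0"
proof -
  have "(\<Sum>i\<in>UNIV. u i t) = 0" if "t \<ge> t0" for t
    unfolding input_eq_static_input[OF that] by (rule sum_static_input_eq_0[OF undirected])
  with s_ode have "(\<Sum>i\<in>UNIV. s i t) = 0"
    using s_init assms by (rule sum_linear_ode_solutions_eq_0)
  then show ?thesis
    by (simp add: deviation_def x_def sum.distrib sum_subtractf sum_constant_scaleR del: sum_constant)
qed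

lemma deviation_has_derivative:
  assumes "t \<ge> t0"
  shows "(deviation i has_vector_derivative
      A *v deviation i t + B *v (u i t + f i t - mean_disturbance t)) (at t within {t0..})"
proof -
  have "x i = (\<lambda>t. s i t + r i t)"
    by (simp add: fun_eq_iff x_def)
  then have "(x i has_vector_derivative A *v x i t + B *v (u i t + f i t)) (at t within {t0..})"
    using has_vector_derivative_add[OF s_ode[OF assms] r_ode[OF assms]]
    by (simp add: x_def algebra_simps matrix_vector_right_distrib)
  from has_vector_derivative_deviation_from_mean[where f = "\<lambda>k. f k t", OF this r_ode[OF assms]]
  show ?thesis
    by (simp add: deviation_def[abs_def] mean_disturbance_def algebra_simps)
qed

lemma lyapunov_decrease:
  fixes P Q :: "real^'n^'n"
  assumes "connected_graph E" "transpose P = P"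
    and "P ** A + transpose A ** P - P ** B ** transpose B ** P + Q = 0"
    and "K = - (transpose B ** P)" "c1 \<ge> 1 / (2 * lambda2 E)" "c2 \<ge> f0 * (real CARD('v) - 1)"
    and "\<epsilon> > 0" "\<And>i. norm (f i t) \<le> f0" "t \<ge> t0"
  shows "(\<Sum>i\<in>UNIV. 2 * ((P *v deviation i t)
        \<bullet> (A *v deviation i t + B *v (u i t + f i t - mean_disturbance t))))
    \<le> - (\<Sum>i\<in>UNIV. deviation i t \<bullet> (Q *v deviation i t))
      + (c2 * \<epsilon> * exp (- \<phi> * \<eta>) * (\<Sum>i\<in>UNIV. real (card (neighbors E i)))) * exp (- \<phi> * t)"
proof -
  have "0 < \<epsilon> * exp (- \<phi> * (t + \<eta>))"
    using assms(7) by simp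
  note bound = static_input_lyapunov_bound[where d = "\<lambda>i. f i t" and F = "mean_disturbance t",
      OF undirected assms(1-6) this sum_deviation_eq_0[OF assms(9)] assms(8)]
  have "exp (- \<phi> * (t + \<eta>)) = exp (- \<phi> * \<eta>) * exp (- \<phi> * t)"
    by (simp add: algebra_simps flip: exp_add)
  then have "c2 * (\<epsilon> * exp (- \<phi> * (t + \<eta>))) * (\<Sum>i\<in>UNIV. real (card (neighbors E i)))
      = (c2 * \<epsilon> * exp (- \<phi> * \<eta>) * (\<Sum>i\<in>UNIV. real (card (neighbors E i)))) * exp (- \<phi> * t)"
    by (simp only: mult_ac)
  with bound show ?thesis
    unfolding input_eq_static_input[OF assms(9)] by linarith
qed

end

theorem theorem1:
  fixes E :: "'v::finite \<Rightarrow> 'v \<Rightarrow> bool"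
    and A Q P :: "real^'n::finite^'n"
    and B :: "real^'p::finite^'n"
    and K :: "real^'n^'p"
    and r s x :: "'v \<Rightarrow> real \<Rightarrow> real^'n"
    and f :: "'v \<Rightarrow> real \<Rightarrow> real^'p"
    and u :: "'v \<Rightarrow> real \<Rightarrow> real^'p"
    and tloc :: "'v \<Rightarrow> real \<Rightarrow> real"
    and t0 f0 \<eta> \<epsilon> \<phi> c1 c2 :: real
  assumes G: "undirected_graph E" "connected_graph E"
    and S: "stabilizable A B"
    and f_cont: "\<And>i. continuous_on {t0..} (f i)"
    and f_bound: "\<And>i t. t \<ge> t0 \<Longrightarrow> norm (f i t) \<le> f0"
    and f0_pos: "f0 > 0"
    and r_ode: "\<And>i t. t \<ge> t0 \<Longrightarrow>
        (r i has_vector_derivative (A *v r i t + B *v f i t)) (at t within {t0..})"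
    and clocks: "\<And>i t. t \<ge> t0 \<Longrightarrow> tloc i t = t + \<eta>"
    and eps_pos: "\<epsilon> > 0" and phi_pos: "\<phi> > 0"
    and Q_spd: "sym_pos_def Q"
    and P_spd: "sym_pos_def P"
    and riccati: "P ** A + transpose A ** P - P ** B ** transpose B ** P + Q = 0"
    and K_def: "K = - (transpose B ** P)"
    and c1: "c1 \<ge> 1 / (2 * lambda2 E)"
    and c2: "c2 \<ge> f0 * (real CARD('v) - 1)"
    and x_def: "\<And>i t. x i t = s i t + r i t"
    and u_def: "\<And>i t. u i t =
        c1 *\<^sub>R (\<Sum>j\<in>neighbors E i. K *v (x i t - x j t))
      + c2 *\<^sub>R (\<Sum>j\<in>neighbors E i. hbl \<epsilon> \<phi> (K *v (x i t - x j t)) (tloc i t))"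
    and s_ode: "\<And>i t. t \<ge> t0 \<Longrightarrow>
        (s i has_vector_derivative (A *v s i t + B *v u i t)) (at t within {t0..})"
    and s_init: "\<And>i. s i t0 = 0"
  shows "\<forall>i. ((\<lambda>t. norm (x i t - (1 / real CARD('v)) *\<^sub>R (\<Sum>k\<in>UNIV. r k t))) \<longlongrightarrow> 0) at_top"
proof -
  interpret static_algorithm E A B K r s x f u tloc t0 \<eta> \<epsilon> \<phi> c1 c2
    by unfold_locales (fact G(1) r_ode clocks x_def u_def s_ode s_init)+
  define C where "C = c2 * \<epsilon> * exp (- \<phi> * \<eta>) * (\<Sum>i\<in>UNIV. real (card (neighbors E i)))"
  have "0 \<le> f0 * (real CARD('v) - 1)"
    using f0_pos by (simp add: Suc_le_eq)
  with c2 eps_pos have "0 \<le> C"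
    unfolding C_def by (intro mult_nonneg_nonneg sum_nonneg) auto
  have "transpose P = P"
    using P_spd by (simp add: sym_pos_def_def)
  note decrease = lyapunov_decrease[OF G(2) this riccati K_def c1 c2 eps_pos f_bound, folded C_def]
  have "((\<lambda>t. norm (deviation i t)) \<longlongrightarrow> 0) at_top" for i
    using deviation_has_derivative decrease \<open>0 \<le> C\<close> phi_pos
    by (rule quadratic_lyapunov_tendsto_0[OF P_spd Q_spd])
  then show ?thesis
    by (simp add: deviation_def)
qed

end
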